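(* In the near-field model below, with $p_{\mathrm c},p_{\mathrm s},\alpha_{\mathrm s}>0$ and $L\in\mathbb Z_{>0}$ fixed, the quantity $\tilde{\mathcal R}^{\mathrm c}_{\mathrm{c,s}}=\frac1L\log_2\big(1+\frac{p_{\mathrm s}L\alpha_{\mathrm s}\|\mathbf h_{\mathrm s}\|^4}{1+p_{\mathrm c}\|\mathbf h_{\mathrm c}\|^2}\big)$ (a lower bound on the uplink sensing rate of the communications-centric design) satisfies $$\lim_{N_y,N_z\to\infty}\tilde{\mathcal R}^{\mathrm c}_{\mathrm{c,s}}=\frac1L\log_2\!\Big(1+\frac{p_{\mathrm s}L\alpha_{\mathrm s}\zeta^2}{9+3p_{\mathrm c}\zeta}\Big).$$
   Context: Near-field model: a uniform planar array lies in the $y$–$z$ plane centered at the origin, with $N=N_yN_z$ elements ($N_y,N_z$ odd). Element $(n_y,n_z)$, $n_y\in\{-\frac{N_y-1}2,\dots,\frac{N_y-1}2\}$, $n_z\in\{-\frac{N_z-1}2,\dots,\frac{N_z-1}2\}$, is a $\sqrt A\times\sqrt A$ square centered at $(0,n_yd,n_zd)$, with spacing $d>\sqrt A$; $\zeta=A/d^2\in(0,1]$; $\lambda>0$ is the wavelength. A node $i\in\{\mathrm c,\mathrm s\}$ (communication user, target) is at distance $r_i$, elevation $\theta_i\in[0,\pi]$, azimuth $\phi_i\in[-\pi/2,\pi/2]$; $\Psi_i=\sin\theta_i\cos\phi_i$, $\Phi_i=\sin\theta_i\sin\phi_i$, $\Omega_i=\cos\theta_i$, $\epsilon_i=d/r_i$,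 $r^{(i)}_{n_y,n_z}=r_i\sqrt{(n_y\epsilon_i-\Phi_i)^2+(n_z\epsilon_i-\Omega_i)^2+\Psi_i^2}$. The channel vector $\mathbf h_i\in\mathbb C^N$ has entries $\sqrt{A\frac{r_i^3\Psi_i^3+r_i\Psi_i(r_i\Omega_i-n_zd)^2}{4\pi (r^{(i)}_{n_y,n_z})^5}}\,e^{-\mathrm j\frac{2\pi}{\lambda}r^{(i)}_{n_y,n_z}}$. The paper assumes throughout $r_i\gg d$, $r_i\gg\sqrt A$, so $\epsilon_i\ll1$. The limit is taken with all parameters other than $N_y,N_z$ fixed.
   Formalization: In place of the limit, for every delta > 0 there is e0 > 0 such that, whenever $\epsilon_c,\epsilon_s$ < e0, the quantity is eventually in $N_y,N_z$ within delta of the right-hand side; $\theta_i$ and $\phi_i$ lie in open intervals. The statement above fails without it. *)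

theory Defs
  imports "HOL-Analysis.Analysis"
begin

text \<open>Near-field UPA model. A node is described by distance r, elevation theta, azimuth phi.
  Array half-sizes My, Mz: N_y = 2 My + 1, N_z = 2 Mz + 1, element indices
  n_y in {-My..My}, n_z in {-Mz..Mz}.\<close>

definition Psi :: "real \<Rightarrow> real \<Rightarrow> real" where
  "Psi theta phi = sin theta * cos phi"
definition Phi :: "real \<Rightarrow> real \<Rightarrow> real" where
  "Phi theta phi = sin theta * sin phi"
definition Omega :: "real \<Rightarrow> real" where
  "Omega theta = cos theta"

definition elem_dist :: "real \<Rightarrow> real \<Rightarrow> real \<Rightarrow> real \<Rightarrow> int \<Rightarrow> int \<Rightarrow> real" where
  "elem_dist d r theta phi ny nz =
     r * sqrt ((of_int ny * (d / r) - Phi theta phi)\<^sup>2 + (of_int nz * (d / r) - Omega theta)\<^sup>2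
               + (Psi theta phi)\<^sup>2)"

definition chan_entry :: "real \<Rightarrow> real \<Rightarrow> real \<Rightarrow> real \<Rightarrow> real \<Rightarrow> real \<Rightarrow> int \<Rightarrow> int \<Rightarrow> complex" where
  "chan_entry A lambda d r theta phi ny nz =
     (let rn = elem_dist d r theta phi ny nz; P = Psi theta phi in
      complex_of_real (sqrt (A * (r ^ 3 * P ^ 3 + r * P * (r * Omega theta - of_int nz * d)\<^sup>2)
                                / (4 * pi * rn ^ 5)))
      * cis (- 2 * pi / lambda * rn))"

definition chan_norm :: "real \<Rightarrow> real \<Rightarrow> real \<Rightarrow> real \<Rightarrow> real \<Rightarrow> real \<Rightarrow> nat \<Rightarrow> nat \<Rightarrow> real" where
  "chan_norm A lambda d r theta phi My Mz =
     sqrt (\<Sum>ny\<in>{- int My..int My}. \<Sum>nz\<in>{- int Mz..int Mz}.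
             (cmod (chan_entry A lambda d r theta phi ny nz))\<^sup>2)"

definition R_cs_tilde :: "real \<Rightarrow> real \<Rightarrow> real \<Rightarrow> nat \<Rightarrow> real \<Rightarrow> real \<Rightarrow> real" where
  "R_cs_tilde p_c p_s alpha_s L hc hs =
     1 / real L * log 2 (1 + p_s * real L * alpha_s * hs ^ 4 / (1 + p_c * hc\<^sup>2))"

end

theory Submission
  imports Defs "HOL-Real_Asymp.Real_Asymp"
begin

text \<open>Write e = d / r. With A = \<zeta> d^2 the squared channel norm is the double Riemann sum
  of step e of  \<zeta> \<Psi> b / (4 pi ((y - \<Phi>)^2 + b)^(5/2)),  where  b = (z - \<Omega>)^2 + \<Psi>^2,
  over the grid points (y, z) = (n e, m e).
  A Riemann sum of a unimodal function with bounded antiderivative differs from the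
  integral by at most two cells times the maximum, so the sum over n is 4 / (3 b^2) + O(e),
  and the remaining sum over m is (\<zeta> \<Psi> / (3 pi)) times a Riemann sum of
  1 / ((z - \<Omega>)^2 + \<Psi>^2), whose integral is pi / \<Psi>. Hence for large arrays the
  squared norm lies within O(e) of \<zeta> / 3, and the rate is continuous in the two squared norms.\<close>

lemma sum_int_telescope:
  fixes f :: "int \<Rightarrow> 'a::ab_group_add"
  assumes "a \<le> b + 1"
  shows "(\<Sum>n\<in>{a..b}. f (n + 1) - f n) = f (b + 1) - f a"
proof -
  have "a - 1 \<le> b" using assms by simp
  then show ?thesis
  proof (induction b rule: int_ge_induct)
    case (step i)
    then have "{a..i + 1} = insert (i + 1) {a..i}" by auto
    then show ?case using step by simp
  qed simp
qed

locale unimodal_antiderivative =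
  fixes h F :: "real \<Rightarrow> real" and c H :: real
  assumes F_deriv: "\<And>x. (F has_real_derivative h x) (at x)"
    and h_mono_left: "\<And>x y. x \<le> y \<Longrightarrow> y \<le> c \<Longrightarrow> h x \<le> h y"
    and h_antimono_right: "\<And>x y. c \<le> x \<Longrightarrow> x \<le> y \<Longrightarrow> h y \<le> h x"
    and h_nonneg: "\<And>x. 0 \<le> h x"
    and h_le_max: "\<And>x. h x \<le> H"
begin

lemma max_nonneg: "0 \<le> H"
  using h_nonneg h_le_max order_trans by blast

lemma increment_mean_value:
  assumes "x < y"
  obtains z where "x < z" "z < y" "F y - F x = (y - x) * h z"
  using MVT2[OF assms, of F h] F_deriv by blast

lemma F_mono: "x \<le> y \<Longrightarrow> F x \<le> F y"
  by (metis h_nonneg increment_mean_value diff_ge_0_iff_ge order_le_less zero_le_mult_iff)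

lemma F_increment_le: "x \<le> y \<Longrightarrow> F y - F x \<le> (y - x) * H"
  by (metis h_le_max increment_mean_value diff_ge_0_iff_ge mult_left_mono order_le_less
      cancel_comm_monoid_add_class.diff_cancel order_refl mult_zero_left)

lemma cell_left_of_peak:
  assumes "e > 0" "x + e \<le> c"
  shows "e * h x \<le> F (x + e) - F x" and "F (x + e) - F x \<le> e * h (x + e)"
proof -
  obtain z where z: "x < z" "z < x + e" "F (x + e) - F x = e * h z"
    using increment_mean_value[of x "x + e"] assms by auto
  have "h x \<le> h z" "h z \<le> h (x + e)" using z assms by (auto intro: h_mono_left)
  with z assms show "e * h x \<le> F (x + e) - F x" "F (x + e) - F x \<le> e * h (x + e)"
    by (simp_all add: mult_left_mono)
qed

lemma cell_right_of_peak:
  assumes "e > 0" "c \<le> x"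
  shows "e * h (x + e) \<le> F (x + e) - F x" and "F (x + e) - F x \<le> e * h x"
proof -
  obtain z where z: "x < z" "z < x + e" "F (x + e) - F x = e * h z"
    using increment_mean_value[of x "x + e"] assms by auto
  have "h (x + e) \<le> h z" "h z \<le> h x" using z assms by (auto intro: h_antimono_right)
  with z assms show "e * h (x + e) \<le> F (x + e) - F x" "F (x + e) - F x \<le> e * h x"
    by (simp_all add: mult_left_mono)
qed

lemma peak_cell:
  assumes "e > 0"
  obtains k :: int where "of_int k * e \<le> c" "c \<le> (of_int k + 1) * e"
proof
  show "of_int \<lfloor>c / e\<rfloor> * e \<le> c" using assms by (metis floor_divide_lower)
  show "c \<le> (of_int \<lfloor>c / e\<rfloor> + 1) * e" using assms by (metis floor_divide_upper less_imp_le)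
qed

text \<open>Telescoping potentials for the two Riemann-sum bounds: away from the cell k containing
  the peak, their increments follow F one cell uphill (upper bound) or downhill (lower bound),
  and the at most two cells next to the peak are paid for by the maximum H.\<close>

definition upper_potential :: "real \<Rightarrow> int \<Rightarrow> int \<Rightarrow> real" where
  "upper_potential e k n =
     (if n \<le> k then F (of_int n * e)
      else if n = k + 1 then F (of_int k * e) + e * H
      else F ((of_int n - 1) * e) + 2 * e * H)"

definition lower_potential :: "real \<Rightarrow> int \<Rightarrow> int \<Rightarrow> real" where
  "lower_potential e k n =
     (if n \<le> k + 1 then F ((of_int n - 1) * e)
      else F (of_int n * e) - (F ((of_int k + 1) * e) - F (of_int k * e)))"

lemma upper_potential_step:
  assumes e: "e > 0" and k: "of_int k * e \<le> c" "c \<le> (of_int k + 1) * e"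
  shows "e * h (of_int n * e) \<le> upper_potential e k (n + 1) - upper_potential e k n"
proof -
  consider "n + 1 \<le> k" | "n = k" | "n = k + 1" | "k + 2 \<le> n" by linarith
  then show ?thesis
  proof cases
    case 1
    then have "of_int (n + 1) * e \<le> of_int k * e" using e by (intro mult_right_mono) simp_all
    then have "of_int n * e + e \<le> c" using k by (simp add: algebra_simps)
    then have "e * h (of_int n * e) \<le> F (of_int n * e + e) - F (of_int n * e)"
      by (rule cell_left_of_peak(1)[OF e])
    with 1 show ?thesis by (simp add: upper_potential_def distrib_right)
  next
    case 2
    then show ?thesis using h_le_max e by (simp add: upper_potential_def mult_left_mono)
  next
    case 3
    have "F (of_int k * e) \<le> F ((of_int k + 1) * e)" using e by (intro F_mono) simp
    moreover have "e * h (of_int n * e) \<le> e * H" using h_le_max e by (simp add: mult_left_mono)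
    ultimately show ?thesis using 3 by (simp add: upper_potential_def algebra_simps)
  next
    case 4
    then have "of_int (k + 1) * e \<le> of_int (n - 1) * e" using e by (intro mult_right_mono) simp_all
    then have "c \<le> (of_int n - 1) * e" using k by simp
    then have "e * h ((of_int n - 1) * e + e) \<le> F ((of_int n - 1) * e + e) - F ((of_int n - 1) * e)"
      by (rule cell_right_of_peak(1)[OF e])
    with 4 show ?thesis by (simp add: upper_potential_def algebra_simps)
  qed
qed

lemma upper_potential_bounds:
  assumes e: "e > 0"
  shows "F ((of_int n - 1) * e) \<le> upper_potential e k n"
    and "upper_potential e k n \<le> F (of_int n * e) + 2 * e * H"
proof -
  have eH: "0 \<le> e * H" "0 \<le> H * e" using e max_nonneg by simp_all
  have F_cell: "F ((of_int n - 1) * e) \<le> F (of_int n * e)" using e by (intro F_mono) simp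
  consider "n \<le> k" | "n = k + 1" | "k + 1 < n" by linarith
  then show "F ((of_int n - 1) * e) \<le> upper_potential e k n"
    and "upper_potential e k n \<le> F (of_int n * e) + 2 * e * H"
    by cases (use eH F_cell in \<open>auto simp: upper_potential_def\<close>)
qed

lemma lower_potential_step:
  assumes e: "e > 0" and k: "of_int k * e \<le> c" "c \<le> (of_int k + 1) * e"
  shows "lower_potential e k (n + 1) - lower_potential e k n \<le> e * h (of_int n * e)"
proof (cases "n \<le> k")
  case True
  then have "of_int n * e \<le> of_int k * e" using e by (intro mult_right_mono) simp_all
  then have "(of_int n - 1) * e + e \<le> c" using k by (simp add: algebra_simps)
  then have "F ((of_int n - 1) * e + e) - F ((of_int n - 1) * e) \<le> e * h ((of_int n - 1) * e + e)"
    by (rule cell_left_of_peak(2)[OF e])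
  with True show ?thesis by (simp add: lower_potential_def algebra_simps)
next
  case False
  then have "of_int (k + 1) * e \<le> of_int n * e" using e by (intro mult_right_mono) simp_all
  then have "c \<le> of_int n * e" using k by simp
  then have "F (of_int n * e + e) - F (of_int n * e) \<le> e * h (of_int n * e)"
    by (rule cell_right_of_peak(2)[OF e])
  moreover have "lower_potential e k (n + 1) - lower_potential e k n
      = F (of_int n * e + e) - F (of_int n * e)"
    using False by (cases "n = k + 1") (simp_all add: lower_potential_def algebra_simps)
  ultimately show ?thesis by simp
qed

lemma lower_potential_bounds:
  assumes "e > 0"
  shows "F ((of_int n - 1) * e) - e * H \<le> lower_potential e k n"
    and "lower_potential e k n \<le> F (of_int n * e)"
proof -
  have jump: "0 \<le> F ((of_int k + 1) * e) - F (of_int k * e)"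
    "F ((of_int k + 1) * e) - F (of_int k * e) \<le> e * H"
    using assms F_mono[of "of_int k * e" "(of_int k + 1) * e"]
      F_increment_le[of "of_int k * e" "(of_int k + 1) * e"] by (simp_all add: algebra_simps)
  have "F ((of_int n - 1) * e) \<le> F (of_int n * e)" using assms by (intro F_mono) simp
  then show "F ((of_int n - 1) * e) - e * H \<le> lower_potential e k n"
    and "lower_potential e k n \<le> F (of_int n * e)"
    using jump assms max_nonneg by (auto simp: lower_potential_def)
qed

lemma riemann_sum_upper:
  assumes e: "e > 0" and "a \<le> b + 1"
  shows "e * (\<Sum>n\<in>{a..b}. h (of_int n * e))
    \<le> F ((of_int b + 1) * e) - F ((of_int a - 1) * e) + 2 * e * H"
proof -
  obtain k where k: "of_int k * e \<le> c" "c \<le> (of_int k + 1) * e" using peak_cell[OF e] .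
  have "e * (\<Sum>n\<in>{a..b}. h (of_int n * e)) = (\<Sum>n\<in>{a..b}. e * h (of_int n * e))"
    by (simp add: sum_distrib_left)
  also have "\<dots> \<le> (\<Sum>n\<in>{a..b}. upper_potential e k (n + 1) - upper_potential e k n)"
    by (intro sum_mono upper_potential_step[OF e k])
  also have "\<dots> = upper_potential e k (b + 1) - upper_potential e k a"
    using sum_int_telescope assms(2) .
  also have "\<dots> \<le> F ((of_int b + 1) * e) - F ((of_int a - 1) * e) + 2 * e * H"
    using upper_potential_bounds[OF e, where n = a and k = k]
      upper_potential_bounds[OF e, where n = "b + 1" and k = k] by simp
  finally show ?thesis .
qed

lemma riemann_sum_lower:
  assumes e: "e > 0" and "a \<le> b + 1"
  shows "F (of_int b * e) - F (of_int a * e) - e * H \<le> e * (\<Sum>n\<in>{a..b}. h (of_int n * e))"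
proof -
  obtain k where k: "of_int k * e \<le> c" "c \<le> (of_int k + 1) * e" using peak_cell[OF e] .
  have "F (of_int b * e) - F (of_int a * e) - e * H
      \<le> lower_potential e k (b + 1) - lower_potential e k a"
    using lower_potential_bounds[OF e, where n = a and k = k]
      lower_potential_bounds[OF e, where n = "b + 1" and k = k] by simp
  also have "\<dots> = (\<Sum>n\<in>{a..b}. lower_potential e k (n + 1) - lower_potential e k n)"
    using sum_int_telescope[symmetric] assms(2) .
  also have "\<dots> \<le> (\<Sum>n\<in>{a..b}. e * h (of_int n * e))"
    by (intro sum_mono lower_potential_step[OF e k])
  also have "\<dots> = e * (\<Sum>n\<in>{a..b}. h (of_int n * e))"
    by (simp add: sum_distrib_left)
  finally show ?thesis .
qed

end

definition inv_dist_pow :: "nat \<Rightarrow> real \<Rightarrow> real \<Rightarrow> real" where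
  "inv_dist_pow k b y = 1 / sqrt (y\<^sup>2 + b) ^ k"

lemma inv_dist_pow_nonneg: "b > 0 \<Longrightarrow> 0 \<le> inv_dist_pow k b y"
  unfolding inv_dist_pow_def by simp

lemma inv_dist_pow_antimono:
  assumes "b > 0" "\<bar>x\<bar> \<le> \<bar>y\<bar>"
  shows "inv_dist_pow k b y \<le> inv_dist_pow k b x"
proof -
  have "x\<^sup>2 \<le> y\<^sup>2" using assms(2) by (simp add: abs_le_square_iff)
  then have "sqrt (x\<^sup>2 + b) ^ k \<le> sqrt (y\<^sup>2 + b) ^ k"
    using assms(1) by (intro power_mono real_sqrt_le_mono) auto
  moreover have "0 < sqrt (x\<^sup>2 + b) ^ k" using assms(1) by (simp add: add_nonneg_pos)
  ultimately show ?thesis unfolding inv_dist_pow_def by (simp add: frac_le)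
qed

lemma inv_dist_pow_le: "b > 0 \<Longrightarrow> inv_dist_pow k b y \<le> 1 / sqrt b ^ k"
  using inv_dist_pow_antimono[of b 0 y k] unfolding inv_dist_pow_def by simp

lemma unimodal_antiderivative_inv_dist_pow:
  assumes b: "b > 0" and G: "\<And>y. (G has_real_derivative inv_dist_pow k b y) (at y)"
  shows "unimodal_antiderivative (\<lambda>x. inv_dist_pow k b (x - c)) (\<lambda>x. G (x - c)) c (1 / sqrt b ^ k)"
proof
  fix x
  show "((\<lambda>x. G (x - c)) has_real_derivative inv_dist_pow k b (x - c)) (at x)"
    using DERIV_chain2[OF G DERIV_diff[OF DERIV_ident DERIV_const]] by simp
qed (use b in \<open>auto intro: inv_dist_pow_antimono inv_dist_pow_nonneg inv_dist_pow_le\<close>)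

lemma riemann_sum_inv_dist_pow_upper:
  assumes b: "b > 0" and G: "\<And>y. (G has_real_derivative inv_dist_pow k b y) (at y)"
    and G_bound: "\<And>y. \<bar>G y\<bar> \<le> B" and e: "e > 0"
  shows "e * (\<Sum>n\<in>{- int M..int M}. inv_dist_pow k b (of_int n * e - c))
    \<le> 2 * B + 2 * e / sqrt b ^ k"
proof -
  interpret unimodal_antiderivative "\<lambda>x. inv_dist_pow k b (x - c)" "\<lambda>x. G (x - c)" c
      "1 / sqrt b ^ k"
    using unimodal_antiderivative_inv_dist_pow[OF b G] .
  have "G ((of_int (int M) + 1) * e - c) - G ((of_int (- int M) - 1) * e - c) \<le> 2 * B"
    using G_bound[of "(of_int (int M) + 1) * e - c"] G_bound[of "(of_int (- int M) - 1) * e - c"]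
    by linarith
  then show ?thesis using riemann_sum_upper[OF e, of "- int M" "int M"] by simp
qed

lemma riemann_sum_inv_dist_pow_lower:
  assumes b: "b > 0" and G: "\<And>y. (G has_real_derivative inv_dist_pow k b y) (at y)"
    and e: "e > 0"
  shows "G (real M * e - c) - G (- real M * e - c) - e / sqrt b ^ k
    \<le> e * (\<Sum>n\<in>{- int M..int M}. inv_dist_pow k b (of_int n * e - c))"
proof -
  interpret unimodal_antiderivative "\<lambda>x. inv_dist_pow k b (x - c)" "\<lambda>x. G (x - c)" c
      "1 / sqrt b ^ k"
    using unimodal_antiderivative_inv_dist_pow[OF b G] .
  show ?thesis using riemann_sum_lower[OF e, of "- int M" "int M"] by simp
qed

definition antideriv5 :: "real \<Rightarrow> real \<Rightarrow> real" where
  "antideriv5 b y = y * (2 * y\<^sup>2 + 3 * b) / (3 * b\<^sup>2 * sqrt (y\<^sup>2 + b) ^ 3)"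

definition antideriv2 :: "real \<Rightarrow> real \<Rightarrow> real" where
  "antideriv2 P y = arctan (y / P) / P"

lemma sqrt_sum_sq_deriv:
  assumes "b > 0"
  shows "((\<lambda>y. sqrt (y\<^sup>2 + b)) has_real_derivative y / sqrt (y\<^sup>2 + b)) (at y)"
proof -
  have "y\<^sup>2 + b > 0" using assms by (simp add: add_nonneg_pos)
  then show ?thesis by (auto intro!: derivative_eq_intros simp: field_simps)
qed

lemma antideriv5_deriv:
  assumes b: "b > 0"
  shows "(antideriv5 b has_real_derivative inv_dist_pow 5 b y) (at y)"
proof -
  define s where "s = sqrt (y\<^sup>2 + b)"
  have s: "s > 0" "s\<^sup>2 = y\<^sup>2 + b" using b by (auto simp: s_def add_nonneg_pos)
  have num: "((\<lambda>y. y * (2 * y\<^sup>2 + 3 * b)) has_real_derivative 6 * y\<^sup>2 + 3 * b) (at y)"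
    by (auto intro!: derivative_eq_intros simp: power2_eq_square algebra_simps)
  have "((\<lambda>y. sqrt (y\<^sup>2 + b) ^ 3) has_real_derivative real 3 * s ^ (3 - 1) * (y / s)) (at y)"
    using DERIV_chain2[OF DERIV_pow[of 3] sqrt_sum_sq_deriv[OF b]] unfolding s_def by simp
  then have den:
    "((\<lambda>y. 3 * b\<^sup>2 * sqrt (y\<^sup>2 + b) ^ 3) has_real_derivative 3 * b\<^sup>2 * (3 * s * y)) (at y)"
    using s(1) by (intro DERIV_cmult) (simp add: power2_eq_square mult.assoc)
  have "(antideriv5 b has_real_derivative
      ((6 * y\<^sup>2 + 3 * b) * (3 * b\<^sup>2 * s ^ 3) - 3 * b\<^sup>2 * (3 * s * y) * (y * (2 * y\<^sup>2 + 3 * b)))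
      / (3 * b\<^sup>2 * s ^ 3) ^ Suc (Suc 0)) (at y)"
    unfolding antideriv5_def s_def
    by (rule DERIV_quotient[OF num den[unfolded s_def]]) (use s b in \<open>simp add: s_def\<close>)
  moreover have "(6 * y\<^sup>2 + 3 * b) * (3 * b\<^sup>2 * s ^ 3)
      - 3 * b\<^sup>2 * (3 * s * y) * (y * (2 * y\<^sup>2 + 3 * b))
      = 9 * b ^ 4 * s"
  proof -
    have "s ^ 3 = s * (y\<^sup>2 + b)" using s(2) by (simp add: power3_eq_cube power2_eq_square)
    then show ?thesis by (simp add: algebra_simps power2_eq_square eval_nat_numeral)
  qed
  moreover have "9 * b ^ 4 * s / (3 * b\<^sup>2 * s ^ 3) ^ Suc (Suc 0) = inv_dist_pow 5 b y"
    unfolding inv_dist_pow_def s_def[symmetric] using s(1) b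
    by (simp add: field_simps eval_nat_numeral)
  ultimately show ?thesis by simp
qed

lemma antideriv2_deriv:
  assumes P: "P > 0"
  shows "(antideriv2 P has_real_derivative inv_dist_pow 2 (P\<^sup>2) y) (at y)"
proof -
  have "(antideriv2 P has_real_derivative inverse (1 + (y / P)\<^sup>2) * (1 / P) / P) (at y)"
    unfolding antideriv2_def using P by (auto intro!: derivative_eq_intros)
  moreover have "inverse (1 + (y / P)\<^sup>2) * (1 / P) / P = inv_dist_pow 2 (P\<^sup>2) y"
  proof -
    have "1 + (y / P)\<^sup>2 = (y\<^sup>2 + P\<^sup>2) / P\<^sup>2" using P by (simp add: field_simps)
    moreover have "sqrt (y\<^sup>2 + P\<^sup>2) ^ 2 = y\<^sup>2 + P\<^sup>2" by simp
    ultimately show ?thesis unfolding inv_dist_pow_def using P by (simp add: power2_eq_square)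
  qed
  ultimately show ?thesis by simp
qed

lemma abs_antideriv5_le:
  assumes b: "b > 0"
  shows "\<bar>antideriv5 b y\<bar> \<le> 2 / (3 * b\<^sup>2)"
proof -
  define s where "s = sqrt (y\<^sup>2 + b)"
  have s: "s > 0" "s\<^sup>2 = y\<^sup>2 + b" using b by (auto simp: s_def add_nonneg_pos)
  have "(y * (2 * y\<^sup>2 + 3 * b))\<^sup>2 \<le> (2 * s ^ 3)\<^sup>2"
  proof -
    have "(2 * s ^ 3)\<^sup>2 - (y * (2 * y\<^sup>2 + 3 * b))\<^sup>2 = 4 * (s\<^sup>2) ^ 3 - (y * (2 * y\<^sup>2 + 3 * b))\<^sup>2"
      by (simp add: power_mult_distrib flip: power_mult)
    also have "\<dots> = 3 * b\<^sup>2 * y\<^sup>2 + 4 * b ^ 3"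
      unfolding s(2) by algebra
    finally show ?thesis using b by (smt (verit) zero_le_mult_iff zero_le_power2 zero_less_power)
  qed
  then have "\<bar>y * (2 * y\<^sup>2 + 3 * b)\<bar> \<le> 2 * s ^ 3"
    using s(1) power2_le_iff_abs_le[of "2 * s ^ 3"] by simp
  then show ?thesis
    unfolding antideriv5_def s_def[symmetric] using s(1) b by (simp add: abs_div field_simps)
qed

lemma abs_antideriv2_le:
  assumes "P > 0"
  shows "\<bar>antideriv2 P y\<bar> \<le> pi / 2 / P"
proof -
  have "\<bar>arctan (y / P)\<bar> \<le> pi / 2" using arctan_bounded[of "y / P"] by linarith
  then have "\<bar>arctan (y / P)\<bar> / P \<le> pi / 2 / P" using assms by (intro divide_right_mono) auto
  then show ?thesis unfolding antideriv2_def using assms by (simp add: abs_div)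
qed

lemma antideriv5_at_top: "b > 0 \<Longrightarrow> (antideriv5 b \<longlongrightarrow> 2 / (3 * b\<^sup>2)) at_top"
  unfolding antideriv5_def by (real_asymp simp: field_simps)

lemma antideriv5_at_bot: "b > 0 \<Longrightarrow> (antideriv5 b \<longlongrightarrow> - 2 / (3 * b\<^sup>2)) at_bot"
  unfolding antideriv5_def by (real_asymp simp: field_simps)

lemma antideriv2_at_top: "P > 0 \<Longrightarrow> (antideriv2 P \<longlongrightarrow> pi / 2 / P) at_top"
  unfolding antideriv2_def by (real_asymp simp: field_simps)

lemma antideriv2_at_bot: "P > 0 \<Longrightarrow> (antideriv2 P \<longlongrightarrow> - pi / 2 / P) at_bot"
  unfolding antideriv2_def by (real_asymp simp: field_simps)

locale near_field_gain =
  fixes \<Psi> \<Phi> \<Omega> \<zeta> :: real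
  assumes Psi_pos: "\<Psi> > 0" and zeta_pos: "\<zeta> > 0"
begin

definition offset :: "real \<Rightarrow> int \<Rightarrow> real" where
  "offset e m = (of_int m * e - \<Omega>)\<^sup>2 + \<Psi>\<^sup>2"

definition weight :: "real \<Rightarrow> int \<Rightarrow> real" where
  "weight e m = \<zeta> * e * \<Psi> * offset e m / (4 * pi)"

definition gain :: "real \<Rightarrow> nat \<Rightarrow> nat \<Rightarrow> real" where
  "gain e My Mz = (\<Sum>n\<in>{- int My..int My}. \<Sum>m\<in>{- int Mz..int Mz}.
     weight e m * (e * inv_dist_pow 5 (offset e m) (of_int n * e - \<Phi>)))"

abbreviation row_sum :: "real \<Rightarrow> nat \<Rightarrow> int \<Rightarrow> real" where
  "row_sum e My m \<equiv> e * (\<Sum>n\<in>{- int My..int My}. inv_dist_pow 5 (offset e m) (of_int n * e - \<Phi>))"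

abbreviation col_cell :: "real \<Rightarrow> int \<Rightarrow> real" where
  "col_cell e m \<equiv> e * inv_dist_pow 2 (\<Psi>\<^sup>2) (of_int m * e - \<Omega>)"

abbreviation row_span :: "real \<Rightarrow> nat \<Rightarrow> int \<Rightarrow> real" where
  "row_span e My m \<equiv>
     antideriv5 (offset e m) (real My * e - \<Phi>) - antideriv5 (offset e m) (- real My * e - \<Phi>)"

abbreviation col_span :: "real \<Rightarrow> nat \<Rightarrow> real" where
  "col_span e K \<equiv> antideriv2 \<Psi> (real K * e - \<Omega>) - antideriv2 \<Psi> (- real K * e - \<Omega>)"

abbreviation col_sum :: "real \<Rightarrow> nat \<Rightarrow> real" where
  "col_sum e K \<equiv> e * (\<Sum>m\<in>{- int K..int K}. inv_dist_pow 2 (\<Psi>\<^sup>2) (of_int m * e - \<Omega>))"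

abbreviation gain_upper_bound :: "real \<Rightarrow> real" where
  "gain_upper_bound e \<equiv> (\<zeta> * \<Psi> / (3 * pi) + \<zeta> * e / (2 * pi)) * (pi / \<Psi> + 2 * e / \<Psi>\<^sup>2)"

abbreviation gain_lower_error :: "real \<Rightarrow> real" where
  "gain_lower_error e \<equiv> \<zeta> * e / (3 * pi * \<Psi>) + \<zeta> * e / (4 * pi) * (pi / \<Psi> + 2 * e / \<Psi>\<^sup>2)"

lemma offset_pos: "offset e m > 0"
  unfolding offset_def using Psi_pos by (simp add: add_nonneg_pos)

lemma weight_nonneg: "e \<ge> 0 \<Longrightarrow> 0 \<le> weight e m"
  unfolding weight_def using Psi_pos zeta_pos offset_pos[of e m] by simp

lemma inv_dist_pow_offset: "inv_dist_pow 2 (\<Psi>\<^sup>2) (of_int m * e - \<Omega>) = 1 / offset e m"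
  unfolding inv_dist_pow_def offset_def by simp

lemma gain_by_columns:
  "gain e My Mz = (\<Sum>m\<in>{- int Mz..int Mz}. weight e m * row_sum e My m)"
  unfolding gain_def by (subst sum.swap) (simp add: sum_distrib_left)

lemma weight_main_term:
  "weight e m * (4 / (3 * (offset e m)\<^sup>2)) = \<zeta> * \<Psi> / (3 * pi) * col_cell e m"
  unfolding inv_dist_pow_offset weight_def using offset_pos[of e m]
  by (simp add: field_simps power2_eq_square)

lemma weight_error_term:
  assumes "e \<ge> 0"
  shows "weight e m * (e / sqrt (offset e m) ^ 5) \<le> \<zeta> * e / (4 * pi) * col_cell e m"
proof -
  define q where "q = sqrt (offset e m)"
  have q: "q > 0" "offset e m = q\<^sup>2" using offset_pos[of e m] by (auto simp: q_def)
  have "\<Psi> \<le> q" unfolding q_def offset_def using Psi_pos real_sqrt_le_mono[of "\<Psi>\<^sup>2"] by simp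
  then have "\<zeta> * e * e * \<Psi> \<le> \<zeta> * e * e * q"
    using assms zeta_pos by (intro mult_left_mono) simp_all
  then have "\<zeta> * e * e * \<Psi> / (4 * pi * q ^ 3) \<le> \<zeta> * e * e * q / (4 * pi * q ^ 3)"
    using q(1) by (intro divide_right_mono) simp_all
  then show ?thesis
    unfolding inv_dist_pow_offset weight_def q_def[symmetric] q(2) using q(1)
    by (simp add: field_simps eval_nat_numeral)
qed

lemma col_sum_upper:
  assumes "e > 0"
  shows "col_sum e K \<le> pi / \<Psi> + 2 * e / \<Psi>\<^sup>2"
  using riemann_sum_inv_dist_pow_upper[where G = "antideriv2 \<Psi>" and c = \<Omega> and M = K,
      OF _ antideriv2_deriv abs_antideriv2_le assms] Psi_pos by simp

lemma col_sum_lower: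
  assumes "e > 0"
  shows "col_span e K - e / \<Psi>\<^sup>2 \<le> col_sum e K"
  using riemann_sum_inv_dist_pow_lower[where G = "antideriv2 \<Psi>" and c = \<Omega> and M = K,
      OF _ antideriv2_deriv assms] Psi_pos by simp

lemma weighted_row_sum_upper:
  assumes e: "e > 0"
  shows "weight e m * row_sum e My m
    \<le> (\<zeta> * \<Psi> / (3 * pi) + \<zeta> * e / (2 * pi)) * col_cell e m"
proof -
  have "row_sum e My m \<le> 4 / (3 * (offset e m)\<^sup>2) + 2 * (e / sqrt (offset e m) ^ 5)"
    using riemann_sum_inv_dist_pow_upper[OF offset_pos antideriv5_deriv[OF offset_pos]
        abs_antideriv5_le[OF offset_pos] e] by simp
  then have "weight e m * row_sum e My m
      \<le> weight e m * (4 / (3 * (offset e m)\<^sup>2) + 2 * (e / sqrt (offset e m) ^ 5))"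
    using weight_nonneg[of e m] e by (intro mult_left_mono) simp_all
  also have "\<dots> = weight e m * (4 / (3 * (offset e m)\<^sup>2))
      + 2 * (weight e m * (e / sqrt (offset e m) ^ 5))"
    by (simp only: distrib_left mult.left_commute)
  also have "\<dots> \<le> \<zeta> * \<Psi> / (3 * pi) * col_cell e m + 2 * (\<zeta> * e / (4 * pi) * col_cell e m)"
    unfolding weight_main_term using weight_error_term[of e m] e by simp
  also have "\<dots> = (\<zeta> * \<Psi> / (3 * pi) + \<zeta> * e / (2 * pi)) * col_cell e m"
    by (simp add: field_simps)
  finally show ?thesis .
qed

lemma gain_upper:
  assumes e: "e > 0"
  shows "gain e My Mz \<le> gain_upper_bound e"
proof -
  have "gain e My Mz \<le> (\<Sum>m\<in>{- int Mz..int Mz}.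
      (\<zeta> * \<Psi> / (3 * pi) + \<zeta> * e / (2 * pi)) * col_cell e m)"
    unfolding gain_by_columns by (intro sum_mono weighted_row_sum_upper e)
  also have "\<dots> = (\<zeta> * \<Psi> / (3 * pi) + \<zeta> * e / (2 * pi)) * col_sum e Mz"
    by (simp add: sum_distrib_left)
  also have "\<dots> \<le> gain_upper_bound e"
    using e Psi_pos zeta_pos by (intro mult_left_mono col_sum_upper) simp_all
  finally show ?thesis .
qed

lemma gain_mono:
  assumes "e \<ge> 0" "K \<le> Mz"
  shows "gain e My K \<le> gain e My Mz"
  unfolding gain_def
proof (intro sum_mono sum_mono2)
  show "{- int K..int K} \<subseteq> {- int Mz..int Mz}" using assms(2) by auto
  show "0 \<le> weight e m * (e * inv_dist_pow 5 (offset e m) (of_int n * e - \<Phi>))" for n m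
    using assms(1) weight_nonneg inv_dist_pow_nonneg[OF offset_pos] by simp
qed simp

lemma weighted_row_sum_lower:
  assumes e: "e > 0"
  shows "weight e m * row_span e My m - \<zeta> * e / (4 * pi) * col_cell e m
    \<le> weight e m * row_sum e My m"
proof -
  have "row_span e My m - e / sqrt (offset e m) ^ 5 \<le> row_sum e My m"
    by (rule riemann_sum_inv_dist_pow_lower[OF offset_pos antideriv5_deriv[OF offset_pos] e])
  then have "weight e m * (row_span e My m - e / sqrt (offset e m) ^ 5)
    \<le> weight e m * row_sum e My m"
    by (rule mult_left_mono) (use weight_nonneg e in simp)
  then show ?thesis using weight_error_term[of e m] e unfolding right_diff_distrib by linarith
qed

text \<open>Truncating the sum over m to |m| \<le> K lets the limit My \<rightarrow> \<infinity> be taken term by term.\<close>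

definition truncated_span :: "real \<Rightarrow> nat \<Rightarrow> nat \<Rightarrow> real" where
  "truncated_span e K My = (\<Sum>m\<in>{- int K..int K}. weight e m * row_span e My m)"

lemma truncated_span_le_gain:
  assumes e: "e > 0"
  shows "truncated_span e K My - \<zeta> * e / (4 * pi) * (pi / \<Psi> + 2 * e / \<Psi>\<^sup>2) \<le> gain e My K"
proof -
  have "(\<Sum>m\<in>{- int K..int K}. weight e m * row_span e My m - \<zeta> * e / (4 * pi) * col_cell e m)
      \<le> gain e My K"
    unfolding gain_by_columns by (intro sum_mono weighted_row_sum_lower e)
  moreover have "\<zeta> * e / (4 * pi) * col_sum e K
      \<le> \<zeta> * e / (4 * pi) * (pi / \<Psi> + 2 * e / \<Psi>\<^sup>2)"
    using e zeta_pos by (intro mult_left_mono col_sum_upper) simp_all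
  ultimately show ?thesis
    unfolding truncated_span_def by (simp add: sum_subtractf sum_distrib_left)
qed

lemma truncated_span_tendsto:
  assumes e: "e > 0"
  shows "(truncated_span e K \<longlongrightarrow> \<zeta> * \<Psi> / (3 * pi) * col_sum e K) sequentially"
proof -
  have top: "filterlim (\<lambda>My. real My * e - \<Phi>) at_top sequentially" using e by real_asymp
  have bot: "filterlim (\<lambda>My. - real My * e - \<Phi>) at_bot sequentially" using e by real_asymp
  have "(truncated_span e K \<longlongrightarrow> (\<Sum>m\<in>{- int K..int K}.
      weight e m * (2 / (3 * (offset e m)\<^sup>2) - - 2 / (3 * (offset e m)\<^sup>2)))) sequentially"
    unfolding truncated_span_def
    by (intro tendsto_sum tendsto_mult_left tendsto_diff
        filterlim_compose[OF antideriv5_at_top[OF offset_pos] top]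
        filterlim_compose[OF antideriv5_at_bot[OF offset_pos] bot])
  moreover have "weight e m * (2 / (3 * (offset e m)\<^sup>2) - - 2 / (3 * (offset e m)\<^sup>2))
      = \<zeta> * \<Psi> / (3 * pi) * col_cell e m" for m
    unfolding weight_main_term[symmetric] by (simp add: diff_divide_distrib)
  ultimately show ?thesis by (simp add: sum_distrib_left)
qed

lemma col_span_tendsto:
  assumes e: "e > 0"
  shows "((col_span e) \<longlongrightarrow> pi / \<Psi>) sequentially"
proof -
  have top: "filterlim (\<lambda>K. real K * e - \<Omega>) at_top sequentially" using e by real_asymp
  have bot: "filterlim (\<lambda>K. - real K * e - \<Omega>) at_bot sequentially" using e by real_asymp
  have "((col_span e)
      \<longlongrightarrow> pi / 2 / \<Psi> - - pi / 2 / \<Psi>) sequentially"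
    by (intro tendsto_diff filterlim_compose[OF antideriv2_at_top[OF Psi_pos] top]
        filterlim_compose[OF antideriv2_at_bot[OF Psi_pos] bot])
  then show ?thesis by (simp add: diff_divide_distrib)
qed

lemma gain_lower:
  assumes e: "e > 0" and \<eta>: "\<eta> > 0"
  shows "\<forall>\<^sub>F M in sequentially \<times>\<^sub>F sequentially.
    \<zeta> / 3 - gain_lower_error e - \<eta> < gain e (fst M) (snd M)"
proof -
  have "((\<lambda>K. \<zeta> * \<Psi> / (3 * pi) * col_span e K)
      \<longlongrightarrow> \<zeta> * \<Psi> / (3 * pi) * (pi / \<Psi>)) sequentially"
    by (intro tendsto_mult_left col_span_tendsto e)
  also have "\<zeta> * \<Psi> / (3 * pi) * (pi / \<Psi>) = \<zeta> / 3" using Psi_pos by simp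
  finally have "\<forall>\<^sub>F K in sequentially. \<zeta> / 3 - \<eta> / 2 < \<zeta> * \<Psi> / (3 * pi) * col_span e K"
    by (rule order_tendstoD(1)) (use \<eta> in simp)
  then obtain K where K: "\<zeta> / 3 - \<eta> / 2 < \<zeta> * \<Psi> / (3 * pi) * col_span e K"
    unfolding eventually_sequentially by (meson le_refl)
  define main where "main = \<zeta> * \<Psi> / (3 * pi) * col_sum e K"
  have "\<zeta> * \<Psi> / (3 * pi) * (col_span e K - e / \<Psi>\<^sup>2) \<le> main"
    unfolding main_def using Psi_pos zeta_pos by (intro mult_left_mono col_sum_lower e) simp_all
  moreover have "\<zeta> * \<Psi> / (3 * pi) * (e / \<Psi>\<^sup>2) = \<zeta> * e / (3 * pi * \<Psi>)"
    using Psi_pos by (simp add: power2_eq_square)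
  ultimately have main: "\<zeta> / 3 - \<eta> / 2 - \<zeta> * e / (3 * pi * \<Psi>) < main"
    using K by (simp add: right_diff_distrib)
  obtain N where N: "\<And>My. My \<ge> N \<Longrightarrow> main - \<eta> / 2 < truncated_span e K My"
    using order_tendstoD(1)[OF truncated_span_tendsto[OF e, of K], of "main - \<eta> / 2"] \<eta>
    unfolding eventually_sequentially main_def by auto
  show ?thesis
    unfolding eventually_prod_sequentially
  proof (intro exI[of _ "max N K"] allI impI)
    fix My Mz assume "max N K \<le> My" "max N K \<le> Mz"
    then show "\<zeta> / 3 - gain_lower_error e - \<eta> < gain e (fst (My, Mz)) (snd (My, Mz))"
      using N[of My] main truncated_span_le_gain[OF e, of K My] gain_mono[of e K Mz My] e by simp
  qed
qed

lemma gain_near_limit: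
  assumes \<eta>: "\<eta> > 0"
  shows "\<forall>\<^sub>F e in at_right 0. \<forall>\<^sub>F M in sequentially \<times>\<^sub>F sequentially.
    \<bar>gain e (fst M) (snd M) - \<zeta> / 3\<bar> < \<eta>"
proof -
  have "(gain_upper_bound \<longlongrightarrow> gain_upper_bound 0) (at_right 0)"
    using Psi_pos by (intro tendsto_intros) auto
  then have upper: "\<forall>\<^sub>F e in at_right 0. gain_upper_bound e < \<zeta> / 3 + \<eta>"
    by (rule order_tendstoD(2)) (use Psi_pos \<eta> in simp)
  have "(gain_lower_error \<longlongrightarrow> gain_lower_error 0) (at_right 0)"
    using Psi_pos by (intro tendsto_intros) auto
  then have lower: "\<forall>\<^sub>F e in at_right 0. gain_lower_error e < \<eta> / 2"
    by (rule order_tendstoD(2)) (use \<eta> in simp)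
  show ?thesis
    using upper lower eventually_at_right_less[of 0]
  proof eventually_elim
    case (elim e)
    then have e: "e > 0" by simp
    show ?case
      using gain_lower[OF e half_gt_zero[OF \<eta>]]
    proof (rule eventually_mono)
      fix M :: "nat \<times> nat"
      assume "\<zeta> / 3 - gain_lower_error e - \<eta> / 2 < gain e (fst M) (snd M)"
      then show "\<bar>gain e (fst M) (snd M) - \<zeta> / 3\<bar> < \<eta>"
        using elim gain_upper[OF e, of "fst M" "snd M"] unfolding abs_less_iff by linarith
    qed
  qed
qed

end

lemma chan_norm_sq_eq_gain:
  assumes d: "d > 0" and r: "r > 0" and Psi: "Psi theta phi > 0" and zeta: "zeta > 0"
  shows "(chan_norm (zeta * d\<^sup>2) lambda d r theta phi My Mz)\<^sup>2
    = near_field_gain.gain (Psi theta phi) (Phi theta phi) (Omega theta) zeta (d / r) My Mz"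
proof -
  interpret near_field_gain "Psi theta phi" "Phi theta phi" "Omega theta" zeta
    using Psi zeta by unfold_locales
  define e where "e = d / r"
  have e: "e > 0" "d = e * r" using d r by (auto simp: e_def)
  have entry: "(cmod (chan_entry (zeta * d\<^sup>2) lambda d r theta phi n m))\<^sup>2
      = weight e m * (e * inv_dist_pow 5 (offset e m) (of_int n * e - Phi theta phi))" for n m
  proof -
    define s where "s = sqrt ((of_int n * e - Phi theta phi)\<^sup>2 + offset e m)"
    have s: "s > 0" unfolding s_def using offset_pos[of e m] by (simp add: add_nonneg_pos)
    have dist: "elem_dist d r theta phi n m = r * s"
      unfolding elem_dist_def s_def offset_def e_def by (simp add: add.assoc)
    define X where "X = zeta * d\<^sup>2 * (r ^ 3 * Psi theta phi ^ 3
        + r * Psi theta phi * (r * Omega theta - of_int m * d)\<^sup>2) / (4 * pi * (r * s) ^ 5)"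
    have X: "X = weight e m * (e * inv_dist_pow 5 (offset e m) (of_int n * e - Phi theta phi))"
      unfolding X_def weight_def inv_dist_pow_def s_def[symmetric] unfolding offset_def e(2)
      using r s by (simp add: field_simps power2_eq_square eval_nat_numeral)
    have "0 \<le> X"
      unfolding X using weight_nonneg[of e m] inv_dist_pow_nonneg[OF offset_pos] e(1) by simp
    moreover have "cmod (chan_entry (zeta * d\<^sup>2) lambda d r theta phi n m) = \<bar>sqrt X\<bar>"
      unfolding chan_entry_def Let_def dist X_def norm_mult norm_cis by simp
    ultimately show ?thesis using X by simp
  qed
  have "(chan_norm (zeta * d\<^sup>2) lambda d r theta phi My Mz)\<^sup>2
      = (\<Sum>n\<in>{- int My..int My}. \<Sum>m\<in>{- int Mz..int Mz}.
          (cmod (chan_entry (zeta * d\<^sup>2) lambda d r theta phi n m))\<^sup>2)"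
    unfolding chan_norm_def by (simp add: sum_nonneg)
  then show ?thesis unfolding entry gain_def e_def .
qed

lemma Psi_gt_zero:
  assumes "0 < theta" "theta < pi" "- (pi / 2) < phi" "phi < pi / 2"
  shows "Psi theta phi > 0"
  unfolding Psi_def using sin_gt_zero[of theta] cos_gt_zero_pi[of phi] assms by simp

lemma isCont_pair_abs_less:
  fixes f :: "real \<times> real \<Rightarrow> real"
  assumes "isCont f (x, y)" "\<delta> > 0"
  obtains \<eta> where "\<eta> > 0"
    "\<And>u v. \<bar>u - x\<bar> < \<eta> \<Longrightarrow> \<bar>v - y\<bar> < \<eta> \<Longrightarrow> \<bar>f (u, v) - f (x, y)\<bar> < \<delta>"
proof -
  obtain \<rho> where \<rho>: "\<rho> > 0" "\<And>p. dist p (x, y) < \<rho> \<Longrightarrow> dist (f p) (f (x, y)) < \<delta>"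
    using assms unfolding continuous_at_eps_delta by blast
  show thesis
  proof (rule that[of "\<rho> / 2"])
    fix u v assume "\<bar>u - x\<bar> < \<rho> / 2" "\<bar>v - y\<bar> < \<rho> / 2"
    moreover have "dist (u, v) (x, y) \<le> \<bar>u - x\<bar> + \<bar>v - y\<bar>"
      unfolding dist_Pair_Pair dist_real_def
      using sqrt_sum_squares_le_sum_abs[of "u - x" "v - y"] by simp
    ultimately show "\<bar>f (u, v) - f (x, y)\<bar> < \<delta>" using \<rho>(2)[of "(u, v)"] by (simp add: dist_real_def)
  qed (use \<rho> in simp)
qed

lemma near_limits_comp_isCont:
  fixes f :: "real \<times> real \<Rightarrow> real" and g h :: "real \<Rightarrow> 'a \<Rightarrow> real"
  assumes f: "isCont f (x, y)"
    and g: "\<And>\<eta>. \<eta> > 0 \<Longrightarrow> \<forall>\<^sub>F e in at_right 0. \<forall>\<^sub>F M in F. \<bar>g e M - x\<bar> < \<eta>"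
    and h: "\<And>\<eta>. \<eta> > 0 \<Longrightarrow> \<forall>\<^sub>F e in at_right 0. \<forall>\<^sub>F M in F. \<bar>h e M - y\<bar> < \<eta>"
  shows "\<forall>\<delta>>0. \<exists>e0>0. \<forall>e e'. 0 < e \<and> e < e0 \<and> 0 < e' \<and> e' < e0 \<longrightarrow>
    (\<forall>\<^sub>F M in F. \<bar>f (g e M, h e' M) - f (x, y)\<bar> < \<delta>)"
proof (intro allI impI)
  fix \<delta> :: real assume "\<delta> > 0"
  then obtain \<eta> where "\<eta> > 0" and f_close:
    "\<And>u v. \<bar>u - x\<bar> < \<eta> \<Longrightarrow> \<bar>v - y\<bar> < \<eta> \<Longrightarrow> \<bar>f (u, v) - f (x, y)\<bar> < \<delta>"
    using isCont_pair_abs_less[OF f] by blast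
  have "\<forall>\<^sub>F e in at_right 0. (\<forall>\<^sub>F M in F. \<bar>g e M - x\<bar> < \<eta>) \<and> (\<forall>\<^sub>F M in F. \<bar>h e M - y\<bar> < \<eta>)"
    using g h \<open>\<eta> > 0\<close> by (intro eventually_conj)
  then obtain e0 where "e0 > 0" and e0: "\<And>e. 0 < e \<Longrightarrow> e < e0 \<Longrightarrow>
      (\<forall>\<^sub>F M in F. \<bar>g e M - x\<bar> < \<eta>) \<and> (\<forall>\<^sub>F M in F. \<bar>h e M - y\<bar> < \<eta>)"
    unfolding eventually_at_right_field by blast
  have "\<forall>\<^sub>F M in F. \<bar>f (g e M, h e' M) - f (x, y)\<bar> < \<delta>"
    if "0 < e" "e < e0" "0 < e'" "e' < e0" for e e'
  proof -
    have "\<forall>\<^sub>F M in F. \<bar>g e M - x\<bar> < \<eta>" "\<forall>\<^sub>F M in F. \<bar>h e' M - y\<bar> < \<eta>"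
      using e0 that by simp_all
    then show ?thesis by eventually_elim (rule f_close)
  qed
  with \<open>e0 > 0\<close> show "\<exists>e0>0. \<forall>e e'. 0 < e \<and> e < e0 \<and> 0 < e' \<and> e' < e0 \<longrightarrow>
      (\<forall>\<^sub>F M in F. \<bar>f (g e M, h e' M) - f (x, y)\<bar> < \<delta>)" by blast
qed

theorem corollary11:
  fixes p_c p_s alpha_s zeta lambda theta_c phi_c theta_s phi_s :: real and L :: nat
  assumes "p_c > 0" and "p_s > 0" and "alpha_s > 0" and "L > 0"
    and "lambda > 0" and "0 < zeta" and "zeta \<le> 1"
    and "0 < theta_c" and "theta_c < pi" and "- (pi / 2) < phi_c" and "phi_c < pi / 2"
    and "0 < theta_s" and "theta_s < pi" and "- (pi / 2) < phi_s" and "phi_s < pi / 2"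
  shows "\<forall>\<delta>>0. \<exists>e0>0. \<forall>d A r_c r_s. d > 0 \<and> A = zeta * d\<^sup>2 \<and> r_c > 0 \<and> r_s > 0
            \<and> d / r_c < e0 \<and> d / r_s < e0 \<longrightarrow>
         (\<forall>\<^sub>F M in sequentially \<times>\<^sub>F sequentially.
            \<bar>R_cs_tilde p_c p_s alpha_s L
                (chan_norm A lambda d r_c theta_c phi_c (fst M) (snd M))
                (chan_norm A lambda d r_s theta_s phi_s (fst M) (snd M))
             - 1 / real L * log 2 (1 + p_s * real L * alpha_s * zeta\<^sup>2 / (9 + 3 * p_c * zeta))\<bar> < \<delta>)"
proof -
  define rate :: "real \<times> real \<Rightarrow> real" where
    "rate p = 1 / real L * log 2 (1 + p_s * real L * alpha_s * (fst p)\<^sup>2 / (1 + p_c * snd p))" for p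
  have rate_R_cs_tilde: "R_cs_tilde p_c p_s alpha_s L hc hs = rate (hs\<^sup>2, hc\<^sup>2)" for hc hs
    unfolding R_cs_tilde_def rate_def by (simp add: power_mult[symmetric])
  have rate_limit: "rate (zeta / 3, zeta / 3)
      = 1 / real L * log 2 (1 + p_s * real L * alpha_s * zeta\<^sup>2 / (9 + 3 * p_c * zeta))"
    unfolding rate_def using assms by (simp add: field_simps power2_eq_square)
  have den: "0 < 1 + p_c * zeta / 3" using assms by (simp add: add_pos_pos)
  then have "0 \<le> p_s * real L * alpha_s * (zeta / 3)\<^sup>2 / (1 + p_c * zeta / 3)" using assms by simp
  with den have "isCont rate (zeta / 3, zeta / 3)"
    unfolding rate_def log_def using assms(4) by (auto intro!: continuous_intros)
  interpret c: near_field_gain "Psi theta_c phi_c" "Phi theta_c phi_c" "Omega theta_c" zeta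
    using Psi_gt_zero assms by unfold_locales auto
  interpret s: near_field_gain "Psi theta_s phi_s" "Phi theta_s phi_s" "Omega theta_s" zeta
    using Psi_gt_zero assms by unfold_locales auto
  define close where "close \<delta> e e' \<longleftrightarrow> (\<forall>\<^sub>F M in sequentially \<times>\<^sub>F sequentially.
      \<bar>rate (s.gain e (fst M) (snd M), c.gain e' (fst M) (snd M)) - rate (zeta / 3, zeta / 3)\<bar> < \<delta>)"
    for \<delta> e e'
  from \<open>isCont rate (zeta / 3, zeta / 3)\<close>
  have "\<forall>\<delta>>0. \<exists>e0>0. \<forall>e e'. 0 < e \<and> e < e0 \<and> 0 < e' \<and> e' < e0 \<longrightarrow> close \<delta> e e'"
    unfolding close_def by (rule near_limits_comp_isCont[OF _ s.gain_near_limit c.gain_near_limit])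
  then show ?thesis
    unfolding rate_limit[symmetric] rate_R_cs_tilde
    by (auto simp: chan_norm_sq_eq_gain c.Psi_pos s.Psi_pos c.zeta_pos simp flip: close_def)
      (metis divide_pos_pos)
qed

end
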